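(* Let $R$ be a finite group which is neither an abelian group of exponent greater than $2$ nor a generalized dicyclic group. Then the set $$\{S\subseteq R\mid S=S^{-1},\ R<N_{\mathrm{Aut}(\Gamma(R,S))}(R)\}$$ has cardinality at most $2^{\mathbf{c}(R)-|R|/96+(\log_2|R|)^2}$.
   Context: $\mathbf{I}(R)=\{x\in R\mid x^2=1\}$, $\mathbf{c}(R)=(|R|+|\mathbf{I}(R)|)/2$. The Cayley digraph $\Gamma(R,S)$ has vertex set $R$ and an arc $(g,h)$ iff $hg^{-1}\in S$; $R$ is identified with its right regular representation inside $\mathrm{Aut}(\Gamma(R,S))$, and $N_{\mathrm{Aut}(\Gamma(R,S))}(R)$ is its normalizer. Generalized dicyclic group: for $A$ abelian of even order and exponent $>2$ and $y$ an involution of $A$, $\mathrm{Dic}(A,y,x)=\langle A,x\mid x^2=y,\ x^{-1}ax=a^{-1}\ \forall a\in A\rangle$; a group is generalized dicyclic if isomorphic to some such group. *)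

theory Defs
  imports "HOL-Algebra.Algebra" "HOL-Analysis.Analysis"
begin

definition invol_set :: "('a, 'b) monoid_scheme \<Rightarrow> 'a set" where
  "invol_set G = {x \<in> carrier G. x \<otimes>\<^bsub>G\<^esub> x = \<one>\<^bsub>G\<^esub>}"

definition c_num :: "('a, 'b) monoid_scheme \<Rightarrow> real" where
  "c_num G = (real (card (carrier G)) + real (card (invol_set G))) / 2"

definition subset_inv :: "('a, 'b) monoid_scheme \<Rightarrow> 'a set \<Rightarrow> 'a set" where
  "subset_inv G S = m_inv G ` S"

definition rreg :: "('a, 'b) monoid_scheme \<Rightarrow> 'a \<Rightarrow> 'a \<Rightarrow> 'a" where
  "rreg G r = (\<lambda>x. if x \<in> carrier G then x \<otimes>\<^bsub>G\<^esub> r else x)"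

definition reg_rep :: "('a, 'b) monoid_scheme \<Rightarrow> ('a \<Rightarrow> 'a) set" where
  "reg_rep G = rreg G ` carrier G"

text \<open>Aut(Gamma(R,S)): permutations of the vertex set R (identity off R) preserving
  arcs, where (g,h) is an arc iff h g^{-1} \<in> S.\<close>
definition cay_aut :: "('a, 'b) monoid_scheme \<Rightarrow> 'a set \<Rightarrow> ('a \<Rightarrow> 'a) set" where
  "cay_aut G S = {f. bij_betw f (carrier G) (carrier G)
      \<and> (\<forall>x. x \<notin> carrier G \<longrightarrow> f x = x)
      \<and> (\<forall>g\<in>carrier G. \<forall>h\<in>carrier G.
            (h \<otimes>\<^bsub>G\<^esub> inv\<^bsub>G\<^esub> g \<in> S) \<longleftrightarrow> (f h \<otimes>\<^bsub>G\<^esub> inv\<^bsub>G\<^esub> (f g) \<in> S))}"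

definition cay_normalizer :: "('a, 'b) monoid_scheme \<Rightarrow> 'a set \<Rightarrow> ('a \<Rightarrow> 'a) set" where
  "cay_normalizer G S = {f \<in> cay_aut G S.
      (\<lambda>p. f \<circ> p \<circ> inv_into UNIV f) ` reg_rep G = reg_rep G}"

definition abelian_exp_gt2 :: "('a, 'b) monoid_scheme \<Rightarrow> bool" where
  "abelian_exp_gt2 G \<longleftrightarrow> comm_group G \<and> (\<exists>x\<in>carrier G. x \<otimes>\<^bsub>G\<^esub> x \<noteq> \<one>\<^bsub>G\<^esub>)"

text \<open>Generalized dicyclic group Dic(A,y,x), recognised internally: an abelian subgroup A
  of index 2 of even order and exponent > 2, an element x outside A with x^2 = y an
  involution of A and x^{-1} a x = a^{-1} for all a in A.\<close>
definition gen_dicyclic :: "('a, 'b) monoid_scheme \<Rightarrow> bool" where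
  "gen_dicyclic G \<longleftrightarrow> (\<exists>A x y.
      subgroup A G \<and> (\<forall>a\<in>A. \<forall>b\<in>A. a \<otimes>\<^bsub>G\<^esub> b = b \<otimes>\<^bsub>G\<^esub> a)
      \<and> finite A \<and> even (card A) \<and> (\<exists>a\<in>A. a \<otimes>\<^bsub>G\<^esub> a \<noteq> \<one>\<^bsub>G\<^esub>)
      \<and> x \<in> carrier G \<and> x \<notin> A \<and> carrier G = A \<union> (x <#\<^bsub>G\<^esub> A)
      \<and> y \<in> A \<and> y \<noteq> \<one>\<^bsub>G\<^esub> \<and> y \<otimes>\<^bsub>G\<^esub> y = \<one>\<^bsub>G\<^esub>
      \<and> x \<otimes>\<^bsub>G\<^esub> x = y
      \<and> (\<forall>a\<in>A. inv\<^bsub>G\<^esub> x \<otimes>\<^bsub>G\<^esub> a \<otimes>\<^bsub>G\<^esub> x = inv\<^bsub>G\<^esub> a))"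

end

theory Submission
  imports Defs
begin

text \<open>
  A non-regular element f of the normaliser yields the non-trivial automorphism
  p x = f x (f 1)^-1 of R with p(S) = S. An inverse-closed p-invariant set is a union of
  classes of the equivalence generated by x ~ x^-1 and x ~ p x; such a class has at least
  two elements unless x^2 = 1, and at least four if p x is neither x nor x^-1. Hence at most
  2^(c(R) - m/4) sets are p-invariant, m being the number of elements with p x not in
  {x, x^-1}. If m < |R|/16, the subgroup F of fixed points of p and the cosets of F that p
  inverts entirely cover almost all of R; the theorem that an endomorphism inverting more than
  three quarters of a group inverts all of it then forces R to be abelian of exponent > 2 or
  generalized dicyclic. Finally R is generated by log_2 |R| elements, so it has at most
  |R|^(log_2 |R|) endomorphisms.
\<close>

section \<open>Subgroups and endomorphisms of finite groups\<close>

context group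
begin

lemma card_subgroup_dvd:
  assumes "subgroup H G" "subgroup K G" "H \<subseteq> K"
  shows "card H dvd card K"
proof -
  interpret K: group "G\<lparr>carrier := K\<rparr>" using subgroup_imp_group assms(2) .
  have "subgroup H (G\<lparr>carrier := K\<rparr>)" using subgroup_incl assms .
  from K.lagrange[OF this] have "card (rcosets\<^bsub>G\<lparr>carrier := K\<rparr>\<^esub> H) * card H = card K"
    by (simp add: Coset.order_def)
  then show ?thesis by (metis dvd_triv_right)
qed

lemma double_card_le_if_proper_subgroup:
  assumes H: "subgroup H G" and K: "subgroup K G" and HK: "H \<subset> K" and fin: "finite K"
  shows "2 * card H \<le> card K"
proof -
  obtain q where q: "card K = card H * q"
    using card_subgroup_dvd[OF H K] HK by (auto elim: dvdE)
  have "card H < card K" using psubset_card_mono[OF fin HK] .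
  then have "q \<noteq> 0" "q \<noteq> 1" using q by auto
  then have "2 \<le> q" by linarith
  then show ?thesis using q mult_le_mono2[of 2 q "card H"] by (simp add: mult.commute)
qed

lemma subgroup_eq_if_card_gt_half:
  assumes "subgroup H G" "subgroup K G" "H \<subseteq> K" "finite K" "card K < 2 * card H"
  shows "H = K"
proof (rule ccontr)
  assume "H \<noteq> K"
  then have "2 * card H \<le> card K"
    using double_card_le_if_proper_subgroup[OF assms(1,2) _ assms(4)] assms(3) by blast
  then show False using assms(5) by linarith
qed

lemma proper_subgroup_index_two_or_ge_three:
  assumes H: "subgroup H G" and fin: "finite (carrier G)" and ne: "H \<noteq> carrier G"
  shows "2 * card H = card (carrier G) \<or> 3 * card H \<le> card (carrier G)"
proof -
  obtain q where q: "card (carrier G) = card H * q"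
    using card_subgroup_dvd[OF H subgroup_self subgroup.subset[OF H]] by (auto elim: dvdE)
  have "card H < card (carrier G)"
    using psubset_card_mono[OF fin] subgroup.subset[OF H] ne by blast
  then have "q \<noteq> 0" "q \<noteq> 1" using q by auto
  then have "q = 2 \<or> 3 \<le> q" by linarith
  then show ?thesis using q mult_le_mono2[of 3 q "card H"] by (auto simp: mult.commute)
qed

lemma mult_inv_cancel [simp]: "x \<in> carrier G \<Longrightarrow> y \<in> carrier G \<Longrightarrow> x \<otimes> (inv x \<otimes> y) = y"
  and inv_mult_cancel [simp]: "x \<in> carrier G \<Longrightarrow> y \<in> carrier G \<Longrightarrow> inv x \<otimes> (x \<otimes> y) = y"
  by (simp_all add: m_assoc[symmetric])

lemma inv_commute:
  assumes "x \<in> carrier G" "y \<in> carrier G" "x \<otimes> y = y \<otimes> x"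
  shows "inv x \<otimes> y = y \<otimes> inv x"
proof -
  have "inv x \<otimes> y = inv x \<otimes> (y \<otimes> x) \<otimes> inv x" using assms(1,2) by (simp add: m_assoc)
  also have "\<dots> = inv x \<otimes> (x \<otimes> y) \<otimes> inv x" using assms(3) by simp
  also have "\<dots> = y \<otimes> inv x" using assms(1,2) by (simp add: m_assoc[symmetric])
  finally show ?thesis .
qed

lemma subgroup_commuting_with:
  assumes H: "subgroup H G" and W: "W \<subseteq> carrier G"
  shows "subgroup {x\<in>H. \<forall>y\<in>W. x \<otimes> y = y \<otimes> x} G"
proof (rule subgroupI)
  have HG: "H \<subseteq> carrier G" using H by (rule subgroup.subset)
  then show "{x\<in>H. \<forall>y\<in>W. x \<otimes> y = y \<otimes> x} \<subseteq> carrier G" by blast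
  have "\<one> \<in> {x\<in>H. \<forall>y\<in>W. x \<otimes> y = y \<otimes> x}"
    using subgroup.one_closed[OF H] W by auto
  then show "{x\<in>H. \<forall>y\<in>W. x \<otimes> y = y \<otimes> x} \<noteq> {}" by blast
  fix a b
  assume a: "a \<in> {x\<in>H. \<forall>y\<in>W. x \<otimes> y = y \<otimes> x}"
  then show "inv a \<in> {x\<in>H. \<forall>y\<in>W. x \<otimes> y = y \<otimes> x}"
    using HG W inv_commute subgroup.m_inv_closed[OF H] by blast
  assume b: "b \<in> {x\<in>H. \<forall>y\<in>W. x \<otimes> y = y \<otimes> x}"
  have "a \<otimes> b \<otimes> y = y \<otimes> (a \<otimes> b)" if y: "y \<in> W" for y
  proof -
    have G: "a \<in> carrier G" "b \<in> carrier G" "y \<in> carrier G" using a b y HG W by auto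
    have "a \<otimes> b \<otimes> y = a \<otimes> (y \<otimes> b)" using b y G by (simp add: m_assoc)
    also have "\<dots> = y \<otimes> a \<otimes> b" using a y G by (simp add: m_assoc[symmetric])
    finally show ?thesis using G by (simp add: m_assoc)
  qed
  then show "a \<otimes> b \<in> {x\<in>H. \<forall>y\<in>W. x \<otimes> y = y \<otimes> x}"
    using a b subgroup.m_closed[OF H] by blast
qed

lemma carrier_subset_subgroup_if_index_two:
  assumes C: "subgroup C G" and carr: "carrier G = F \<union> (t <# F)" and FC: "F \<subseteq> C" and tC: "t \<in> C"
  shows "carrier G \<subseteq> C"
  using carr FC tC subgroup.m_closed[OF C] unfolding l_coset_def by blast

lemma endo_one: "b \<in> hom G G \<Longrightarrow> b \<one> = \<one>"
  using hom_one is_group by blast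

lemma endo_inv: "b \<in> hom G G \<Longrightarrow> x \<in> carrier G \<Longrightarrow> b (inv x) = inv (b x)"
  using group_hom.hom_inv[of G G b x] is_group by (simp add: group_hom_def group_hom_axioms_def)

lemma subgroup_equalizer:
  assumes p: "p \<in> hom G G" and q: "q \<in> hom G G"
  shows "subgroup {x\<in>carrier G. p x = q x} G"
  by (rule subgroupI) (use p q in \<open>auto simp: endo_one endo_inv hom_mult\<close>)

lemma subgroup_fixed_points: "p \<in> hom G G \<Longrightarrow> subgroup {x\<in>carrier G. p x = x} G"
  using subgroup_equalizer[of p "\<lambda>x. x"] by (simp add: homI)

lemma conj_hom: "s \<in> carrier G \<Longrightarrow> (\<lambda>x. inv s \<otimes> x \<otimes> s) \<in> hom G G"
  by (rule homI) (simp_all add: m_assoc)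

lemma conj_eq_self_iff:
  assumes "x \<in> carrier G" "f \<in> carrier G"
  shows "inv x \<otimes> f \<otimes> x = f \<longleftrightarrow> f \<otimes> x = x \<otimes> f"
proof -
  have "inv x \<otimes> f \<otimes> x = f \<longleftrightarrow> x \<otimes> (inv x \<otimes> f \<otimes> x) = x \<otimes> f" using assms by simp
  also have "x \<otimes> (inv x \<otimes> f \<otimes> x) = f \<otimes> x" using assms by (simp add: m_assoc)
  finally show ?thesis .
qed

lemma inverted_mult_commute:
  assumes b: "b \<in> hom G G" and x: "x \<in> carrier G" "b x = inv x" and y: "y \<in> carrier G" "b y = inv y"
    and xy: "b (x \<otimes> y) = inv (x \<otimes> y)"
  shows "x \<otimes> y = y \<otimes> x"
proof -
  have "inv (x \<otimes> y) = inv (y \<otimes> x)"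
    using xy hom_mult[OF b x(1) y(1)] x y by (simp add: inv_mult_group)
  then show ?thesis using x y by (metis inv_inv m_closed)
qed

lemma commute_if_endo_inverts_subgroup:
  assumes b: "b \<in> hom G G" and H: "subgroup H G" and inverts: "\<forall>h\<in>H. b h = inv h"
    and x: "x \<in> H" and y: "y \<in> H"
  shows "x \<otimes> y = y \<otimes> x"
  using inverted_mult_commute[OF b] inverts x y subgroup.m_closed[OF H x y]
    subgroup.mem_carrier[OF H] by blast

lemma subgroup_inverted_if_commutative:
  assumes b: "b \<in> hom G G" and H: "subgroup H G" and comm: "\<forall>x\<in>H. \<forall>y\<in>H. x \<otimes> y = y \<otimes> x"
  shows "subgroup {h\<in>H. b h = inv h} G"
proof (rule subgroupI)
  have HG: "H \<subseteq> carrier G" using H by (rule subgroup.subset)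
  then show "{h\<in>H. b h = inv h} \<subseteq> carrier G" by blast
  show "{h\<in>H. b h = inv h} \<noteq> {}" using subgroup.one_closed[OF H] endo_one[OF b] by force
  fix x y assume x: "x \<in> {h\<in>H. b h = inv h}"
  then show "inv x \<in> {h\<in>H. b h = inv h}"
    using HG endo_inv[OF b] subgroup.m_inv_closed[OF H] by auto
  assume y: "y \<in> {h\<in>H. b h = inv h}"
  have xyG: "x \<in> carrier G" "y \<in> carrier G" using x y HG by auto
  have "b (x \<otimes> y) = inv (y \<otimes> x)"
    using x y xyG hom_mult[OF b] by (simp add: inv_mult_group)
  then show "x \<otimes> y \<in> {h\<in>H. b h = inv h}"
    using x y comm subgroup.m_closed[OF H] by auto
qed

text \<open>
  An element h inverted by b centralises at least 2|I| - |H| > |H|/2 elements of H, where I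
  is the set of inverted elements: for y \<in> I with h y \<in> I, the two commute.
\<close>
lemma centralizes_subgroup_if_three_quarters_inverted:
  assumes H: "subgroup H G" and fH: "finite H" and b: "b \<in> hom G G"
    and big: "3 * card H < 4 * card {h\<in>H. b h = inv h}"
    and h: "h \<in> H" "b h = inv h"
  shows "\<forall>y\<in>H. y \<otimes> h = h \<otimes> y"
proof -
  define I where "I = {h\<in>H. b h = inv h}"
  define A where "A = {y\<in>H. h \<otimes> y \<in> I}"
  define C where "C = {y\<in>H. y \<otimes> h = h \<otimes> y}"
  have HG: "H \<subseteq> carrier G" using H by (rule subgroup.subset)
  have hG: "h \<in> carrier G" using h HG by blast
  have "A = (\<lambda>z. inv h \<otimes> z) ` I"
  proof (intro equalityI subsetI)
    fix y assume "y \<in> A"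
    then show "y \<in> (\<lambda>z. inv h \<otimes> z) ` I"
      using HG hG unfolding A_def by (auto intro!: image_eqI[of _ _ "h \<otimes> y"] simp: m_assoc[symmetric])
  next
    fix y assume "y \<in> (\<lambda>z. inv h \<otimes> z) ` I"
    then obtain z where z: "z \<in> I" "y = inv h \<otimes> z" by blast
    then have "y \<in> H" using h subgroup.m_closed[OF H subgroup.m_inv_closed[OF H]] unfolding I_def by blast
    moreover have "h \<otimes> y = z" using z HG hG unfolding I_def by (auto simp: m_assoc[symmetric])
    ultimately show "y \<in> A" using z unfolding A_def by simp
  qed
  moreover have "inj_on (\<lambda>z. inv h \<otimes> z) I"
    by (rule inj_on_subset[OF inj_on_cmult]) (use hG HG in \<open>auto simp: I_def\<close>)
  ultimately have cA: "card A = card I" by (simp add: card_image)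
  have "card (I \<union> A) + card (I \<inter> A) = card I + card A"
    using card_Un_Int[of I A] fH unfolding I_def A_def by simp
  moreover have "card (I \<union> A) \<le> card H" using card_mono[OF fH] unfolding I_def A_def by auto
  moreover have "I \<inter> A \<subseteq> C"
    using inverted_mult_commute[OF b hG h(2)] HG unfolding I_def A_def C_def by auto
  moreover from this have "card (I \<inter> A) \<le> card C" by (rule card_mono[rotated]) (use fH in \<open>simp add: C_def\<close>)
  ultimately have "card H < 2 * card C" using cA big unfolding I_def by linarith
  moreover have "subgroup C G" using subgroup_commuting_with[OF H, of "{h}"] hG unfolding C_def by simp
  ultimately have "C = H" using subgroup_eq_if_card_gt_half[OF _ H _ fH] unfolding C_def by blast
  then show ?thesis unfolding C_def by blast
qed

theorem inverts_subgroup_if_three_quarters_inverted: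
  assumes H: "subgroup H G" and fH: "finite H" and b: "b \<in> hom G G"
    and big: "3 * card H < 4 * card {h\<in>H. b h = inv h}"
  shows "\<forall>h\<in>H. b h = inv h"
proof -
  define I where "I = {h\<in>H. b h = inv h}"
  define Z where "Z = {x\<in>H. \<forall>y\<in>H. x \<otimes> y = y \<otimes> x}"
  have "I \<subseteq> Z"
    using centralizes_subgroup_if_three_quarters_inverted[OF H fH b big] unfolding I_def Z_def by auto
  then have "card I \<le> card Z" by (rule card_mono[rotated]) (use fH in \<open>simp add: Z_def\<close>)
  then have "card H < 2 * card Z" using big unfolding I_def by linarith
  then have "Z = H"
    using subgroup_eq_if_card_gt_half[OF subgroup_commuting_with[OF H subgroup.subset[OF H]] H _ fH]
    unfolding Z_def by blast
  then have "subgroup I G"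
    using subgroup_inverted_if_commutative[OF b H] unfolding I_def Z_def by blast
  moreover have "card H < 2 * card I" using big unfolding I_def by linarith
  ultimately have "I = H" using subgroup_eq_if_card_gt_half[OF _ H _ fH] unfolding I_def by blast
  then show ?thesis unfolding I_def by blast
qed

lemma abelian_exp_gt2_if_endo_inverts_all:
  assumes b: "b \<in> hom G G" and inverts: "\<forall>x\<in>carrier G. b x = inv x"
    and x: "x \<in> carrier G" "b x \<noteq> x"
  shows "abelian_exp_gt2 G"
proof -
  have "comm_group G"
    by (rule group_comm_groupI) (use commute_if_endo_inverts_subgroup[OF b subgroup_self inverts] in blast)
  moreover have "x \<otimes> x \<noteq> \<one>"
  proof
    assume "x \<otimes> x = \<one>"
    then have "inv x = x" using x by (simp add: inv_equality)
    then show False using x inverts by simp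
  qed
  ultimately show ?thesis unfolding abelian_exp_gt2_def using x by blast
qed

lemma card_coset_slice_shift:
  assumes H: "subgroup H G" and t: "t \<in> carrier G" and h: "h \<in> H"
  shows "card {f\<in>H. t \<otimes> f \<in> B} = card {g\<in>H. t \<otimes> h \<otimes> g \<in> B}"
proof -
  have HG: "H \<subseteq> carrier G" using H by (rule subgroup.subset)
  have hG: "h \<in> carrier G" using h HG by blast
  have eq: "{f\<in>H. t \<otimes> f \<in> B} = (\<lambda>g. h \<otimes> g) ` {g\<in>H. t \<otimes> h \<otimes> g \<in> B}"
  proof (intro equalityI subsetI)
    fix f assume f: "f \<in> {f\<in>H. t \<otimes> f \<in> B}"
    then have fG: "f \<in> carrier G" using HG by blast
    show "f \<in> (\<lambda>g. h \<otimes> g) ` {g\<in>H. t \<otimes> h \<otimes> g \<in> B}"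
    proof (rule image_eqI)
      show "f = h \<otimes> (inv h \<otimes> f)" using hG fG by simp
      have "inv h \<otimes> f \<in> H" using f subgroup.m_closed[OF H subgroup.m_inv_closed[OF H h]] by blast
      moreover have "t \<otimes> h \<otimes> (inv h \<otimes> f) = t \<otimes> f" using t hG fG by (simp add: m_assoc)
      ultimately show "inv h \<otimes> f \<in> {g\<in>H. t \<otimes> h \<otimes> g \<in> B}" using f by simp
    qed
  next
    fix f assume "f \<in> (\<lambda>g. h \<otimes> g) ` {g\<in>H. t \<otimes> h \<otimes> g \<in> B}"
    then obtain g where g: "g \<in> H" "t \<otimes> h \<otimes> g \<in> B" and fg: "f = h \<otimes> g" by blast
    have "t \<otimes> h \<otimes> g = t \<otimes> f" using fg t hG g(1) HG by (auto simp: m_assoc)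
    then show "f \<in> {f\<in>H. t \<otimes> f \<in> B}" using fg g subgroup.m_closed[OF H h g(1)] by simp
  qed
  have "inj_on (\<lambda>g. h \<otimes> g) {g\<in>H. t \<otimes> h \<otimes> g \<in> B}"
    by (rule inj_on_subset[OF inj_on_cmult[OF hG]]) (use HG in blast)
  then show ?thesis unfolding eq by (rule card_image)
qed

lemma sum_card_translates_le:
  assumes fin: "finite (carrier G)" and FG: "F \<subseteq> carrier G" and MG: "M \<subseteq> carrier G"
    and VG: "V \<subseteq> carrier G"
  shows "(\<Sum>t\<in>V. card {f\<in>F. t \<otimes> f \<in> M}) \<le> card F * card M"
proof -
  have fF: "finite F" using finite_subset[OF FG fin] .
  have fM: "finite M" using finite_subset[OF MG fin] .
  have "(\<Sum>t\<in>V. card {f\<in>F. t \<otimes> f \<in> M}) \<le> (\<Sum>t\<in>carrier G. card {f\<in>F. t \<otimes> f \<in> M})"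
    by (rule sum_mono2[OF fin VG]) simp
  also have "\<dots> = (\<Sum>t\<in>carrier G. \<Sum>f\<in>F. if t \<otimes> f \<in> M then 1 else 0)"
    using sum.inter_filter[OF fF, of "\<lambda>_. 1::nat"] by simp
  also have "\<dots> = (\<Sum>f\<in>F. \<Sum>t\<in>carrier G. if t \<otimes> f \<in> M then 1 else 0)" by (rule sum.swap)
  also have "\<dots> = (\<Sum>f\<in>F. card {t\<in>carrier G. t \<otimes> f \<in> M})"
    using sum.inter_filter[OF fin, of "\<lambda>_. 1::nat"] by simp
  also have "\<dots> \<le> (\<Sum>f\<in>F. card M)"
  proof (rule sum_mono)
    fix f assume "f \<in> F"
    then have "inj_on (\<lambda>t. t \<otimes> f) {t\<in>carrier G. t \<otimes> f \<in> M}"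
      using FG by (intro inj_onI) auto
    then show "card {t\<in>carrier G. t \<otimes> f \<in> M} \<le> card M"
      using card_inj_on_le[OF _ _ fM] by blast
  qed
  finally show ?thesis by simp
qed

lemma card_inverting_le_card_centralizing:
  assumes F: "subgroup F G" and fin: "finite (carrier G)"
    and t: "t \<in> carrier G" "\<forall>f\<in>F. inv t \<otimes> f \<otimes> t = inv f"
  shows "card {x\<in>carrier G. \<forall>f\<in>F. inv x \<otimes> f \<otimes> x = inv f}
         \<le> card {x\<in>carrier G. \<forall>f\<in>F. x \<otimes> f = f \<otimes> x}"
proof (rule card_inj_on_le)
  have FG: "F \<subseteq> carrier G" using F by (rule subgroup.subset)
  show "inj_on (\<lambda>x. inv t \<otimes> x) {x\<in>carrier G. \<forall>f\<in>F. inv x \<otimes> f \<otimes> x = inv f}"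
    using inj_on_subset[OF inj_on_cmult[of "inv t"]] t by auto
  show "(\<lambda>x. inv t \<otimes> x) ` {x\<in>carrier G. \<forall>f\<in>F. inv x \<otimes> f \<otimes> x = inv f}
        \<subseteq> {x\<in>carrier G. \<forall>f\<in>F. x \<otimes> f = f \<otimes> x}"
  proof
    fix w assume "w \<in> (\<lambda>x. inv t \<otimes> x) ` {x\<in>carrier G. \<forall>f\<in>F. inv x \<otimes> f \<otimes> x = inv f}"
    then obtain x where x: "x \<in> carrier G" "\<forall>f\<in>F. inv x \<otimes> f \<otimes> x = inv f"
      and w: "w = inv t \<otimes> x" by blast
    have "w \<otimes> f = f \<otimes> w" if f: "f \<in> F" for f
    proof -
      have fG: "f \<in> carrier G" and ifF: "inv f \<in> F" using f FG subgroup.m_inv_closed[OF F] by auto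
      have "t \<otimes> f \<otimes> inv t = t \<otimes> (inv t \<otimes> inv f \<otimes> t) \<otimes> inv t" using t(2) ifF fG by simp
      also have "\<dots> = inv f" using t(1) fG by (simp add: m_assoc)
      finally have tf: "t \<otimes> f \<otimes> inv t = inv f" .
      have "inv w \<otimes> f \<otimes> w = inv x \<otimes> (t \<otimes> f \<otimes> inv t) \<otimes> x"
        using x(1) t(1) fG by (simp add: w inv_mult_group m_assoc)
      also have "\<dots> = inv x \<otimes> inv f \<otimes> x" using tf by simp
      also have "\<dots> = f" using x(2) ifF fG by simp
      finally show ?thesis using conj_eq_self_iff[of w f] x(1) t(1) fG w by simp
    qed
    then show "w \<in> {x\<in>carrier G. \<forall>f\<in>F. x \<otimes> f = f \<otimes> x}" using w x(1) t(1) by simp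
  qed
qed (use fin in simp)

lemma comm_group_if_index_two_central:
  assumes carr: "carrier G = F \<union> (t <# F)" and FG: "F \<subseteq> carrier G"
    and abF: "\<forall>x\<in>F. \<forall>y\<in>F. x \<otimes> y = y \<otimes> x" and t: "t \<in> carrier G"
    and tcomm: "\<forall>f\<in>F. f \<otimes> t = t \<otimes> f"
  shows "comm_group G"
proof -
  have "F \<union> {t} \<subseteq> {x\<in>carrier G. \<forall>z\<in>F \<union> {t}. x \<otimes> z = z \<otimes> x}"
    using abF tcomm FG t by auto
  moreover have "subgroup {x\<in>carrier G. \<forall>z\<in>F \<union> {t}. x \<otimes> z = z \<otimes> x} G"
    using subgroup_commuting_with[OF subgroup_self, of "F \<union> {t}"] FG t by simp
  ultimately have "carrier G \<subseteq> {x\<in>carrier G. \<forall>z\<in>F \<union> {t}. x \<otimes> z = z \<otimes> x}"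
    using carrier_subset_subgroup_if_index_two[OF _ carr] by blast
  then have "F \<union> {t} \<subseteq> {x\<in>carrier G. \<forall>z\<in>carrier G. x \<otimes> z = z \<otimes> x}"
    using FG t by fastforce
  then have "carrier G \<subseteq> {x\<in>carrier G. \<forall>z\<in>carrier G. x \<otimes> z = z \<otimes> x}"
    using carrier_subset_subgroup_if_index_two[OF subgroup_commuting_with[OF subgroup_self subset_refl] carr]
    by blast
  then show "comm_group G" by (intro group_comm_groupI) blast
qed

text \<open>
  The dihedral-type alternative t^2 = 1 is excluded by hypothesis; then t^2 is a central
  involution of F and the two cases are whether F has exponent 2.
\<close>
lemma abelian_or_dicyclic_if_index_two_inverted:
  assumes F: "subgroup F G" "finite F"
    and t: "t \<in> carrier G" "t \<notin> F" and carr: "carrier G = F \<union> (t <# F)"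
    and inverts: "\<forall>f\<in>F. inv t \<otimes> f \<otimes> t = inv f" and tt: "t \<otimes> t \<noteq> \<one>"
  shows "abelian_exp_gt2 G \<or> gen_dicyclic G"
proof -
  have FG: "F \<subseteq> carrier G" using F(1) by (rule subgroup.subset)
  have abF: "\<forall>x\<in>F. \<forall>y\<in>F. x \<otimes> y = y \<otimes> x"
    using commute_if_endo_inverts_subgroup[OF conj_hom[OF t(1)] F(1)] inverts by blast
  define y where "y = t \<otimes> t"
  have yF: "y \<in> F"
  proof (rule ccontr)
    assume "y \<notin> F"
    then have "t \<otimes> t \<in> t <# F" using carr t(1) unfolding y_def by auto
    then obtain f where f: "f \<in> F" "t \<otimes> t = t \<otimes> f" unfolding l_coset_def by blast
    then have "t = f" using t(1) FG by auto
    then show False using f t(2) by blast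
  qed
  have "inv y = inv t \<otimes> y \<otimes> t" using inverts yF by simp
  also have "\<dots> = y" using t(1) by (simp add: y_def m_assoc)
  finally have "inv y = y" .
  then have yy: "y \<otimes> y = \<one>" using yF FG by (metis r_inv subsetD)
  have "subgroup {\<one>, y} G"
    by (rule subgroupI) (use yF FG yy \<open>inv y = y\<close> in auto)
  then have "card {\<one>, y} dvd card F"
    using card_subgroup_dvd F(1) yF subgroup.one_closed[OF F(1)] by simp
  moreover have "card {\<one>, y} = 2" using tt unfolding y_def by auto
  ultimately have evF: "even (card F)" by simp
  show ?thesis
  proof (cases "\<exists>f\<in>F. f \<otimes> f \<noteq> \<one>")
    case True
    have "y \<noteq> \<one>" "t \<otimes> t = y" using tt unfolding y_def by auto
    then have "gen_dicyclic G"
      unfolding gen_dicyclic_def using F abF evF True t carr yF yy inverts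
      by (intro exI[of _ F] exI[of _ t] exI[of _ y]) blast
    then show ?thesis ..
  next
    case False
    have "f \<otimes> t = t \<otimes> f" if f: "f \<in> F" for f
    proof -
      have fG: "f \<in> carrier G" using f FG by blast
      have "inv f = f" using False f fG inv_equality[of f f] by blast
      then have "inv t \<otimes> f \<otimes> t = f" using inverts f by simp
      then show ?thesis using conj_eq_self_iff[OF t(1) fG] by blast
    qed
    then have "comm_group G" using comm_group_if_index_two_central[OF carr FG abF t(1)] by blast
    then show ?thesis unfolding abelian_exp_gt2_def using t(1) tt by blast
  qed
qed

end

section \<open>Fixed, inverted and moved points of an endomorphism\<close>

definition fixed_set :: "('a, 'b) monoid_scheme \<Rightarrow> ('a \<Rightarrow> 'a) \<Rightarrow> 'a set" where
  "fixed_set G p = {x \<in> carrier G. p x = x}"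

definition inverted_set :: "('a, 'b) monoid_scheme \<Rightarrow> ('a \<Rightarrow> 'a) \<Rightarrow> 'a set" where
  "inverted_set G p = {x \<in> carrier G. p x = inv\<^bsub>G\<^esub> x}"

definition moved_set :: "('a, 'b) monoid_scheme \<Rightarrow> ('a \<Rightarrow> 'a) \<Rightarrow> 'a set" where
  "moved_set G p = {x \<in> carrier G. p x \<noteq> x \<and> p x \<noteq> inv\<^bsub>G\<^esub> x}"

locale finite_group_endo = group G for G (structure) +
  fixes a :: "'a \<Rightarrow> 'a"
  assumes endo: "a \<in> hom G G" and finite_carrier: "finite (carrier G)"
begin

abbreviation "fixed \<equiv> fixed_set G a"
abbreviation "inverted \<equiv> inverted_set G a"
abbreviation "moved \<equiv> moved_set G a"

definition fully_inverted :: "'a set" where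
  "fully_inverted = {t \<in> carrier G - fixed. \<forall>f\<in>fixed. t \<otimes> f \<in> inverted}"

definition partly_inverted :: "'a set" where
  "partly_inverted = carrier G - fixed - fully_inverted"

lemma fixed_subgroup: "subgroup fixed G"
  unfolding fixed_set_def using subgroup_fixed_points[OF endo] .

lemma fixed_subset: "fixed \<subseteq> carrier G"
  and inverted_subset: "inverted \<subseteq> carrier G"
  and moved_subset: "moved \<subseteq> carrier G"
  unfolding fixed_set_def inverted_set_def moved_set_def by auto

lemma finite_fixed: "finite fixed"
  using finite_subset[OF fixed_subset finite_carrier] .

lemma moved_eq: "moved = carrier G - fixed - inverted"
  unfolding fixed_set_def inverted_set_def moved_set_def by auto

lemma card_fixed_pos: "0 < card fixed"
  using finite_fixed subgroup.one_closed[OF fixed_subgroup] card_gt_0_iff by blast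

lemma mult_fixed_notin_fixed:
  assumes t: "t \<in> carrier G - fixed" and f: "f \<in> fixed"
  shows "t \<otimes> f \<in> carrier G - fixed"
proof -
  have fG: "f \<in> carrier G" using f fixed_subset by blast
  have "t \<otimes> f \<notin> fixed"
  proof
    assume "t \<otimes> f \<in> fixed"
    then have "t \<otimes> f \<otimes> inv f \<in> fixed"
      using subgroup.m_closed[OF fixed_subgroup _ subgroup.m_inv_closed[OF fixed_subgroup f]] by blast
    then show False using t fG by (simp add: m_assoc)
  qed
  then show ?thesis using t fG by auto
qed

lemma mult_fixed_inverted_iff:
  assumes t: "t \<in> inverted" and f: "f \<in> fixed"
  shows "t \<otimes> f \<in> inverted \<longleftrightarrow> inv t \<otimes> f \<otimes> t = inv f"
proof -
  have tG: "t \<in> carrier G" "a t = inv t" and fG: "f \<in> carrier G" "a f = f"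
    using t f unfolding inverted_set_def fixed_set_def by auto
  have "t \<otimes> f \<in> inverted \<longleftrightarrow> inv t \<otimes> f = inv f \<otimes> inv t"
    using hom_mult[OF endo tG(1) fG(1)] tG fG unfolding inverted_set_def by (simp add: inv_mult_group)
  also have "\<dots> \<longleftrightarrow> inv t \<otimes> f \<otimes> t = inv f \<otimes> inv t \<otimes> t"
    using tG fG by (intro right_cancel[symmetric]) auto
  also have "inv f \<otimes> inv t \<otimes> t = inv f" using tG fG by (simp add: m_assoc)
  finally show ?thesis .
qed

lemma card_translates_inverted:
  assumes t: "t \<in> carrier G" and f1: "f1 \<in> fixed" and s: "t \<otimes> f1 \<in> inverted"
  shows "card {f\<in>fixed. t \<otimes> f \<in> inverted}
         = card {g\<in>fixed. inv (t \<otimes> f1) \<otimes> g \<otimes> (t \<otimes> f1) = inv g}"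
proof -
  have eq: "{g\<in>fixed. t \<otimes> f1 \<otimes> g \<in> inverted}
            = {g\<in>fixed. inv (t \<otimes> f1) \<otimes> g \<otimes> (t \<otimes> f1) = inv g}"
    by (rule Collect_cong) (use mult_fixed_inverted_iff[OF s] in blast)
  show ?thesis by (subst card_coset_slice_shift[OF fixed_subgroup t f1]) (simp only: eq)
qed

lemma card_translates_moved:
  assumes t: "t \<in> carrier G - fixed"
  shows "card {f\<in>fixed. t \<otimes> f \<in> moved} = card fixed - card {f\<in>fixed. t \<otimes> f \<in> inverted}"
proof -
  have "{f\<in>fixed. t \<otimes> f \<in> moved} = fixed - {f\<in>fixed. t \<otimes> f \<in> inverted}"
  proof (intro equalityI subsetI)
    fix f assume "f \<in> {f\<in>fixed. t \<otimes> f \<in> moved}"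
    then show "f \<in> fixed - {f\<in>fixed. t \<otimes> f \<in> inverted}" unfolding moved_eq by blast
  next
    fix f assume f: "f \<in> fixed - {f\<in>fixed. t \<otimes> f \<in> inverted}"
    then have "t \<otimes> f \<in> carrier G - fixed" using mult_fixed_notin_fixed[OF t] by blast
    then show "f \<in> {f\<in>fixed. t \<otimes> f \<in> moved}" using f unfolding moved_eq by blast
  qed
  then show ?thesis using finite_fixed by (simp add: card_Diff_subset)
qed

lemma fully_inverted_conj:
  assumes "t \<in> fully_inverted"
  shows "t \<in> inverted" "\<forall>f\<in>fixed. inv t \<otimes> f \<otimes> t = inv f"
proof -
  have "t \<otimes> \<one> \<in> inverted" "t \<in> carrier G"
    using assms subgroup.one_closed[OF fixed_subgroup] unfolding fully_inverted_def by auto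
  then show "t \<in> inverted" by simp
  show "\<forall>f\<in>fixed. inv t \<otimes> f \<otimes> t = inv f"
  proof
    fix f assume f: "f \<in> fixed"
    then have "t \<otimes> f \<in> inverted" using assms unfolding fully_inverted_def by blast
    then show "inv t \<otimes> f \<otimes> t = inv f" using mult_fixed_inverted_iff[OF \<open>t \<in> inverted\<close> f] by blast
  qed
qed

text \<open>
  If t F meets the inverted points at all, say in s, then by the 3/4 theorem applied to
  conjugation by s, either t F is fully inverted or at most 3/4 of it is inverted.
\<close>
lemma card_fixed_le_translates_moved:
  assumes t: "t \<in> partly_inverted"
  shows "card fixed \<le> 4 * card {f\<in>fixed. t \<otimes> f \<in> moved}"
proof (cases "{f\<in>fixed. t \<otimes> f \<in> inverted} = {}")
  case True
  then have "card {f\<in>fixed. t \<otimes> f \<in> inverted} = 0" by (simp only: card.empty)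
  then show ?thesis using card_translates_moved t unfolding partly_inverted_def by simp
next
  case False
  have tG: "t \<in> carrier G - fixed" and nfull: "t \<notin> fully_inverted"
    using t unfolding partly_inverted_def by auto
  obtain f1 where f1: "f1 \<in> fixed" "t \<otimes> f1 \<in> inverted" using False by blast
  define s where "s = t \<otimes> f1"
  have sG: "s \<in> carrier G" using f1 inverted_subset unfolding s_def by blast
  have cs: "card {f\<in>fixed. t \<otimes> f \<in> inverted} = card {g\<in>fixed. inv s \<otimes> g \<otimes> s = inv g}"
    using card_translates_inverted[OF _ f1] tG unfolding s_def by blast
  have "4 * card {f\<in>fixed. t \<otimes> f \<in> inverted} \<le> 3 * card fixed"
  proof (rule ccontr)
    assume "\<not> ?thesis"
    then have "3 * card fixed < 4 * card {g\<in>fixed. inv s \<otimes> g \<otimes> s = inv g}" using cs by linarith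
    then have "\<forall>g\<in>fixed. inv s \<otimes> g \<otimes> s = inv g"
      by (rule inverts_subgroup_if_three_quarters_inverted[OF fixed_subgroup finite_fixed conj_hom[OF sG]])
    then have "{g\<in>fixed. inv s \<otimes> g \<otimes> s = inv g} = fixed" by blast
    then have "card {f\<in>fixed. t \<otimes> f \<in> inverted} = card fixed" using cs by simp
    then have "{f\<in>fixed. t \<otimes> f \<in> inverted} = fixed"
      by (intro card_subset_eq[OF finite_fixed]) auto
    then have "fixed \<subseteq> {f\<in>fixed. t \<otimes> f \<in> inverted}" by simp
    then show False using tG nfull unfolding fully_inverted_def by blast
  qed
  then show ?thesis using card_translates_moved[OF tG] by linarith
qed

lemma card_partly_inverted_le: "card partly_inverted \<le> 4 * card moved"
proof -
  have "card partly_inverted * card fixed = (\<Sum>t\<in>partly_inverted. card fixed)" by simp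
  also have "\<dots> \<le> (\<Sum>t\<in>partly_inverted. 4 * card {f\<in>fixed. t \<otimes> f \<in> moved})"
    by (rule sum_mono) (rule card_fixed_le_translates_moved)
  also have "\<dots> = 4 * (\<Sum>t\<in>partly_inverted. card {f\<in>fixed. t \<otimes> f \<in> moved})"
    by (simp add: sum_distrib_left)
  also have "\<dots> \<le> 4 * (card fixed * card moved)"
    using sum_card_translates_le[OF finite_carrier fixed_subset moved_subset, of partly_inverted]
    unfolding partly_inverted_def by auto
  finally show ?thesis using card_fixed_pos by (simp add: mult.commute mult.left_commute)
qed

lemma card_carrier_eq: "card (carrier G) = card fixed + card fully_inverted + card partly_inverted"
proof -
  have "carrier G = fixed \<union> (fully_inverted \<union> partly_inverted)"
    using fixed_subset unfolding partly_inverted_def fully_inverted_def by blast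
  moreover have "finite fully_inverted" "finite partly_inverted"
    using finite_carrier unfolding fully_inverted_def partly_inverted_def by auto
  moreover have "fixed \<inter> (fully_inverted \<union> partly_inverted) = {}"
    "fully_inverted \<inter> partly_inverted = {}"
    unfolding partly_inverted_def fully_inverted_def by auto
  ultimately show ?thesis using finite_fixed by (simp add: card_Un_disjoint)
qed

lemma partly_inverted_mult_fixed:
  assumes t: "t \<in> partly_inverted" and f: "f \<in> fixed"
  shows "t \<otimes> f \<in> partly_inverted"
proof -
  have tG: "t \<in> carrier G" "t \<notin> fixed" "t \<notin> fully_inverted"
    using t unfolding partly_inverted_def by auto
  have fG: "f \<in> carrier G" using f fixed_subset by auto
  have "t \<otimes> f \<notin> fully_inverted"
  proof
    assume full: "t \<otimes> f \<in> fully_inverted"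
    have "t \<otimes> g \<in> inverted" if g: "g \<in> fixed" for g
    proof -
      have "inv f \<otimes> g \<in> fixed"
        using g subgroup.m_closed[OF fixed_subgroup subgroup.m_inv_closed[OF fixed_subgroup f]] by simp
      then have "t \<otimes> f \<otimes> (inv f \<otimes> g) \<in> inverted" using full unfolding fully_inverted_def by simp
      moreover have "g \<in> carrier G" using g fixed_subset by auto
      ultimately show ?thesis using tG fG by (simp add: m_assoc)
    qed
    then have "t \<in> fully_inverted" using tG unfolding fully_inverted_def by simp
    then show False using tG by simp
  qed
  then show ?thesis using mult_fixed_notin_fixed[OF _ f] tG unfolding partly_inverted_def by simp
qed

lemma abelian_or_dicyclic_if_index_two:
  assumes idx: "2 * card fixed = card (carrier G)" and small: "16 * card moved < card (carrier G)"
  shows "abelian_exp_gt2 G \<or> gen_dicyclic G"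
proof -
  have "partly_inverted = {}"
  proof (rule ccontr)
    assume "partly_inverted \<noteq> {}"
    then obtain t where t: "t \<in> partly_inverted" by blast
    then have tG: "t \<in> carrier G" unfolding partly_inverted_def by blast
    have "inj_on (\<lambda>f. t \<otimes> f) fixed"
      using inj_on_subset[OF inj_on_cmult[OF tG] fixed_subset] .
    moreover have "(\<lambda>f. t \<otimes> f) ` fixed \<subseteq> partly_inverted"
      using partly_inverted_mult_fixed[OF t] by blast
    moreover have "finite partly_inverted" using finite_carrier unfolding partly_inverted_def by simp
    ultimately have "card fixed \<le> card partly_inverted" using card_inj_on_le by blast
    then show False using card_partly_inverted_le idx small by linarith
  qed
  have "fixed \<noteq> carrier G" using idx card_fixed_pos by auto
  then obtain t where tG: "t \<in> carrier G" and tF: "t \<notin> fixed" using fixed_subset by blast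
  with \<open>partly_inverted = {}\<close> have t: "t \<in> fully_inverted" unfolding partly_inverted_def by blast
  have "(\<lambda>f. t \<otimes> f) ` fixed \<subseteq> carrier G - fixed"
    using mult_fixed_notin_fixed tG tF by blast
  moreover have "card ((\<lambda>f. t \<otimes> f) ` fixed) = card (carrier G - fixed)"
    using card_image[OF inj_on_subset[OF inj_on_cmult[OF tG] fixed_subset]] idx
      card_Diff_subset[OF finite_fixed fixed_subset] by simp
  ultimately have "(\<lambda>f. t \<otimes> f) ` fixed = carrier G - fixed"
    by (intro card_subset_eq) (use finite_carrier in auto)
  then have carr: "carrier G = fixed \<union> (t <# fixed)"
    using fixed_subset unfolding l_coset_def by auto
  have "t \<otimes> t \<noteq> \<one>"
  proof
    assume "t \<otimes> t = \<one>"
    then have "inv t = t" using tG by (simp add: inv_equality)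
    then have "a t = t" using fully_inverted_conj(1)[OF t] unfolding inverted_set_def by auto
    then show False using tG tF unfolding fixed_set_def by blast
  qed
  then show ?thesis
    using abelian_or_dicyclic_if_index_two_inverted[OF fixed_subgroup finite_fixed tG tF carr
        fully_inverted_conj(2)[OF t]] by blast
qed

lemma abelian_exp_gt2_if_fixed_exponent_two:
  assumes idx: "3 * card fixed \<le> card (carrier G)" and small: "16 * card moved < card (carrier G)"
    and exp2: "\<forall>f\<in>fixed. f \<otimes> f = \<one>" and nontriv: "\<exists>x\<in>carrier G. a x \<noteq> x"
  shows "abelian_exp_gt2 G"
proof -
  have "fixed \<subseteq> inverted"
  proof
    fix f assume f: "f \<in> fixed"
    then have "f \<in> carrier G" "a f = f" unfolding fixed_set_def by auto
    moreover have "inv f = f" using f exp2 \<open>f \<in> carrier G\<close> inv_equality[of f f] by blast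
    ultimately show "f \<in> inverted" unfolding inverted_set_def by simp
  qed
  moreover have "fully_inverted \<subseteq> inverted" using fully_inverted_conj(1) by blast
  ultimately have "card (fixed \<union> fully_inverted) \<le> card inverted"
    by (intro card_mono finite_subset[OF inverted_subset finite_carrier]) blast
  moreover have "card (fixed \<union> fully_inverted) = card fixed + card fully_inverted"
    using finite_fixed finite_carrier by (intro card_Un_disjoint) (auto simp: fully_inverted_def)
  ultimately have "card fixed + card fully_inverted \<le> card inverted" by simp
  then have "3 * card (carrier G) < 4 * card {h\<in>carrier G. a h = inv h}"
    using card_carrier_eq card_partly_inverted_le idx small unfolding inverted_set_def by linarith
  then have "\<forall>x\<in>carrier G. a x = inv x"
    using inverts_subgroup_if_three_quarters_inverted[OF subgroup_self finite_carrier endo] by blast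
  then show ?thesis using abelian_exp_gt2_if_endo_inverts_all[OF endo] nontriv by blast
qed

text \<open>
  A coset x F inside the centraliser of F that meets the inverted points is inverted exactly
  on a coset of the proper subgroup {f \<in> F. f^2 = 1}.
\<close>
lemma card_fixed_le_central_translates_moved:
  assumes x: "x \<in> carrier G - fixed" "\<forall>f\<in>fixed. x \<otimes> f = f \<otimes> x"
    and abF: "\<forall>f\<in>fixed. \<forall>g\<in>fixed. f \<otimes> g = g \<otimes> f"
    and f0: "f0 \<in> fixed" "f0 \<otimes> f0 \<noteq> \<one>"
  shows "card fixed \<le> 2 * card {f\<in>fixed. x \<otimes> f \<in> moved}"
proof (cases "{f\<in>fixed. x \<otimes> f \<in> inverted} = {}")
  case True
  then have "card {f\<in>fixed. x \<otimes> f \<in> inverted} = 0" by (simp only: card.empty)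
  then show ?thesis using card_translates_moved[OF x(1)] by simp
next
  case False
  then obtain f1 where f1: "f1 \<in> fixed" "x \<otimes> f1 \<in> inverted" by blast
  define s where "s = x \<otimes> f1"
  define Om where "Om = {g\<in>fixed. g = inv g}"
  have sG: "s \<in> carrier G" and f1G: "f1 \<in> carrier G" and xG: "x \<in> carrier G"
    using f1 x fixed_subset unfolding s_def by auto
  have "inv s \<otimes> g \<otimes> s = g" if g: "g \<in> fixed" for g
  proof -
    have gG: "g \<in> carrier G" using g fixed_subset by blast
    have "s \<otimes> g = x \<otimes> (f1 \<otimes> g)" using xG f1G gG by (simp add: s_def m_assoc)
    also have "\<dots> = x \<otimes> g \<otimes> f1" using abF f1 g xG f1G gG by (simp add: m_assoc)
    also have "\<dots> = g \<otimes> s" using x(2) g xG f1G gG by (simp add: s_def m_assoc)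
    finally show ?thesis using conj_eq_self_iff[OF sG gG] by simp
  qed
  then have "{g\<in>fixed. inv s \<otimes> g \<otimes> s = inv g} = Om" unfolding Om_def by auto
  then have cs: "card {f\<in>fixed. x \<otimes> f \<in> inverted} = card Om"
    using card_translates_inverted[OF xG f1] unfolding s_def by simp
  have "subgroup Om G"
    using subgroup_inverted_if_commutative[OF _ fixed_subgroup abF, of "\<lambda>y. y"]
    unfolding Om_def by (auto simp: homI)
  moreover have "f0 \<notin> Om"
  proof
    assume "f0 \<in> Om"
    then have "f0 \<otimes> f0 = f0 \<otimes> inv f0" unfolding Om_def by simp
    then show False using f0 fixed_subset by auto
  qed
  then have "Om \<noteq> fixed" using f0 by blast
  ultimately have "2 * card Om \<le> card fixed"
    using double_card_le_if_proper_subgroup[OF _ fixed_subgroup _ finite_fixed] unfolding Om_def by blast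
  then show ?thesis using card_translates_moved[OF x(1)] cs by linarith
qed

lemma card_centralizer_diff_fixed_le:
  assumes abF: "\<forall>f\<in>fixed. \<forall>g\<in>fixed. f \<otimes> g = g \<otimes> f"
    and f0: "f0 \<in> fixed" "f0 \<otimes> f0 \<noteq> \<one>"
  shows "card ({x\<in>carrier G. \<forall>f\<in>fixed. x \<otimes> f = f \<otimes> x} - fixed) \<le> 2 * card moved"
proof -
  define D where "D = {x\<in>carrier G. \<forall>f\<in>fixed. x \<otimes> f = f \<otimes> x} - fixed"
  have "card D * card fixed = (\<Sum>x\<in>D. card fixed)" by simp
  also have "\<dots> \<le> (\<Sum>x\<in>D. 2 * card {f\<in>fixed. x \<otimes> f \<in> moved})"
    by (rule sum_mono, rule card_fixed_le_central_translates_moved[OF _ _ abF f0]) (auto simp: D_def)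
  also have "\<dots> = 2 * (\<Sum>x\<in>D. card {f\<in>fixed. x \<otimes> f \<in> moved})"
    by (simp add: sum_distrib_left)
  also have "\<dots> \<le> 2 * (card fixed * card moved)"
    using sum_card_translates_le[OF finite_carrier fixed_subset moved_subset, of D]
    unfolding D_def by auto
  finally show ?thesis using card_fixed_pos unfolding D_def by (simp add: mult.commute)
qed

text \<open>
  If F had an element of order > 2, its centraliser K would contain more than 5/12 of the
  elements (K is at least as large as the set of elements conjugating F to its inverse, which
  contains the fully inverted points), so K has index 2 and the moved points are too few to
  account for K - F.
\<close>
lemma fixed_exponent_two_if_index_ge_three:
  assumes idx: "3 * card fixed \<le> card (carrier G)" and small: "16 * card moved < card (carrier G)"
  shows "\<forall>f\<in>fixed. f \<otimes> f = \<one>"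
proof (rule ccontr)
  assume "\<not> ?thesis"
  then obtain f0 where f0: "f0 \<in> fixed" "f0 \<otimes> f0 \<noteq> \<one>" by blast
  have f0G: "f0 \<in> carrier G" using f0 fixed_subset by blast
  define K where "K = {x\<in>carrier G. \<forall>f\<in>fixed. x \<otimes> f = f \<otimes> x}"
  define L where "L = {x\<in>carrier G. \<forall>f\<in>fixed. inv x \<otimes> f \<otimes> x = inv f}"
  have "12 * card fully_inverted > 5 * card (carrier G)"
    using card_carrier_eq card_partly_inverted_le idx small by linarith
  then have "fully_inverted \<noteq> {}" by auto
  then obtain t0 where t0: "t0 \<in> fully_inverted" by blast
  have t0G: "t0 \<in> carrier G" using t0 unfolding fully_inverted_def by blast
  have abF: "\<forall>f\<in>fixed. \<forall>g\<in>fixed. f \<otimes> g = g \<otimes> f"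
    using commute_if_endo_inverts_subgroup[OF conj_hom[OF t0G] fixed_subgroup] fully_inverted_conj(2)[OF t0]
    by blast
  have KL: "K \<inter> L = {}"
  proof (rule ccontr)
    assume "K \<inter> L \<noteq> {}"
    then obtain x where x: "x \<in> K" "x \<in> L" by blast
    then have "inv x \<otimes> f0 \<otimes> x = f0" "inv x \<otimes> f0 \<otimes> x = inv f0"
      using f0 f0G conj_eq_self_iff[of x f0] unfolding K_def L_def by auto
    then have "f0 \<otimes> f0 = f0 \<otimes> inv f0" by simp
    then show False using f0 f0G by simp
  qed
  have "fully_inverted \<subseteq> L" using fully_inverted_conj(2) unfolding L_def fully_inverted_def by blast
  then have "card fully_inverted \<le> card L" by (rule card_mono[rotated]) (use finite_carrier in \<open>simp add: L_def\<close>)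
  also have "\<dots> \<le> card K" unfolding K_def L_def
    by (rule card_inverting_le_card_centralizing[OF fixed_subgroup finite_carrier t0G fully_inverted_conj(2)[OF t0]])
  finally have cK: "12 * card K > 5 * card (carrier G)"
    using \<open>12 * card fully_inverted > 5 * card (carrier G)\<close> by linarith
  have "t0 \<notin> K" using KL t0 \<open>fully_inverted \<subseteq> L\<close> by blast
  then have "K \<noteq> carrier G" using t0G by blast
  moreover have Ksub: "subgroup K G" unfolding K_def using subgroup_commuting_with[OF subgroup_self fixed_subset] .
  ultimately have idxK: "2 * card K = card (carrier G)"
    using proper_subgroup_index_two_or_ge_three[OF Ksub finite_carrier] cK by fastforce
  have FK: "fixed \<subseteq> K" using abF fixed_subset unfolding K_def by blast
  have "card (K - fixed) \<le> 2 * card moved"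
    unfolding K_def by (rule card_centralizer_diff_fixed_le[OF abF f0])
  moreover have "card (K - fixed) = card K - card fixed" using card_Diff_subset[OF finite_fixed FK] .
  ultimately show False using idxK idx small by linarith
qed

theorem abelian_or_dicyclic_if_few_moved:
  assumes nontriv: "\<exists>x\<in>carrier G. a x \<noteq> x" and small: "16 * card moved < card (carrier G)"
  shows "abelian_exp_gt2 G \<or> gen_dicyclic G"
proof -
  have "fixed \<noteq> carrier G" using nontriv unfolding fixed_set_def by blast
  then consider "2 * card fixed = card (carrier G)" | "3 * card fixed \<le> card (carrier G)"
    using proper_subgroup_index_two_or_ge_three[OF fixed_subgroup finite_carrier] by blast
  then show ?thesis
  proof cases
    case 1
    then show ?thesis using abelian_or_dicyclic_if_index_two small by blast
  next
    case 2
    then show ?thesis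
      using abelian_exp_gt2_if_fixed_exponent_two fixed_exponent_two_if_index_ge_three small nontriv
      by blast
  qed
qed

end

section \<open>Counting invariant inverse-closed sets\<close>

lemma card_quotient_eq_sum_inverse_card_class:
  assumes eq: "equiv A r" and fA: "finite A"
  shows "real (card (A // r)) = (\<Sum>x\<in>A. 1 / real (card (r `` {x})))"
proof -
  have fC: "\<forall>C\<in>A // r. finite C" using fA Union_quotient[OF eq] by (metis Union_upper finite_subset)
  have dj: "\<forall>C\<in>A // r. \<forall>D\<in>A // r. C \<noteq> D \<longrightarrow> C \<inter> D = {}" using quotient_disj[OF eq] by blast
  have "(\<Sum>x\<in>A. 1 / real (card (r `` {x}))) = (\<Sum>C\<in>A // r. \<Sum>x\<in>C. 1 / real (card (r `` {x})))"
    using sum.Union_disjoint[OF fC dj] Union_quotient[OF eq] by simp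
  also have "\<dots> = (\<Sum>C\<in>A // r. \<Sum>x\<in>C. 1 / real (card C))"
  proof (intro sum.cong refl)
    fix C x assume C: "C \<in> A // r" and x: "x \<in> C"
    from C obtain a where a: "C = r `` {a}" "a \<in> A" by (rule quotientE)
    then have "r `` {a} = r `` {x}" using x equiv_class_eq[OF eq] by blast
    then show "1 / real (card (r `` {x})) = 1 / real (card C)" using a by simp
  qed
  also have "\<dots> = (\<Sum>C\<in>A // r. 1)"
  proof (intro sum.cong refl)
    fix C assume "C \<in> A // r"
    then have "card C > 0" using fC in_quotient_imp_non_empty[OF eq] by (simp add: card_gt_0_iff)
    then show "(\<Sum>x\<in>C. 1 / real (card C)) = 1" by simp
  qed
  finally show ?thesis by simp
qed

text \<open>A set in the family is the union of the classes of its elements under indistinguishability.\<close>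
lemma card_family_le_powr_sum:
  assumes fin: "finite A" and sub: "\<forall>S\<in>\<S>. S \<subseteq> A"
  shows "real (card \<S>) \<le> 2 powr (\<Sum>x\<in>A. 1 / real (card {y\<in>A. \<forall>S\<in>\<S>. x \<in> S \<longleftrightarrow> y \<in> S}))"
proof -
  define E where "E = {(x, y). x \<in> A \<and> y \<in> A \<and> (\<forall>S\<in>\<S>. x \<in> S \<longleftrightarrow> y \<in> S)}"
  have eq: "equiv A E" unfolding equiv_def refl_on_def sym_def trans_def E_def by blast
  have fP: "finite (A // E)" using finite_quotient[OF fin] eq unfolding equiv_def refl_on_def by blast
  have union: "S = \<Union>{C\<in>A // E. C \<subseteq> S}" if "S \<in> \<S>" for S
  proof (intro equalityI subsetI)
    fix x assume "x \<in> S"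
    then have "x \<in> E `` {x}" "E `` {x} \<subseteq> S" "E `` {x} \<in> A // E"
      using that sub unfolding E_def quotient_def by auto
    then show "x \<in> \<Union>{C\<in>A // E. C \<subseteq> S}" by blast
  qed blast
  have "inj_on (\<lambda>S. {C\<in>A // E. C \<subseteq> S}) \<S>"
  proof (rule inj_onI)
    fix S T assume "S \<in> \<S>" "T \<in> \<S>" "{C\<in>A // E. C \<subseteq> S} = {C\<in>A // E. C \<subseteq> T}"
    then show "S = T" using union by metis
  qed
  then have "card \<S> \<le> card (Pow (A // E))"
    by (rule card_inj_on_le) (use fP in auto)
  then have "real (card \<S>) \<le> 2 powr real (card (A // E))"
    using card_Pow[OF fP] by (simp add: powr_realpow)
  also have "real (card (A // E)) = (\<Sum>x\<in>A. 1 / real (card {y\<in>A. \<forall>S\<in>\<S>. x \<in> S \<longleftrightarrow> y \<in> S}))"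
    unfolding card_quotient_eq_sum_inverse_card_class[OF eq fin] by (intro sum.cong refl) (auto simp: E_def)
  finally show ?thesis .
qed

definition invariant_inverse_closed_subsets :: "('a, 'b) monoid_scheme \<Rightarrow> ('a \<Rightarrow> 'a) \<Rightarrow> 'a set set"
  where "invariant_inverse_closed_subsets G p =
    {S. S \<subseteq> carrier G \<and> S = subset_inv G S \<and> (\<forall>x\<in>carrier G. x \<in> S \<longleftrightarrow> p x \<in> S)}"

context group
begin

lemma inv_mem_if_inverse_closed:
  assumes S: "S = subset_inv G S" "S \<subseteq> carrier G" and z: "z \<in> S"
  shows "inv z \<in> S"
proof -
  have "z \<in> m_inv G ` S" using z by (subst (asm) S(1)) (simp add: subset_inv_def)
  then obtain w where "w \<in> S" "z = inv w" by blast
  then show ?thesis using S(2) by auto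
qed

lemma class_contains_inv_and_image:
  assumes p: "p \<in> hom G G" and x: "x \<in> carrier G"
  shows "{x, inv x, p x, inv (p x)}
         \<subseteq> {y\<in>carrier G. \<forall>S\<in>invariant_inverse_closed_subsets G p. x \<in> S \<longleftrightarrow> y \<in> S}"
proof -
  have px: "p x \<in> carrier G" using hom_in_carrier[OF p x] .
  have inv_iff: "z \<in> S \<longleftrightarrow> inv z \<in> S"
    if S: "S \<in> invariant_inverse_closed_subsets G p" and z: "z \<in> carrier G" for S z
  proof -
    have Sc: "S = subset_inv G S" "S \<subseteq> carrier G"
      using S unfolding invariant_inverse_closed_subsets_def by auto
    show ?thesis
    proof
      assume "z \<in> S"
      then show "inv z \<in> S" by (rule inv_mem_if_inverse_closed[OF Sc])
    next
      assume "inv z \<in> S"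
      then have "inv (inv z) \<in> S" by (rule inv_mem_if_inverse_closed[OF Sc])
      then show "z \<in> S" using z by simp
    qed
  qed
  have "x \<in> S \<longleftrightarrow> p x \<in> S" if "S \<in> invariant_inverse_closed_subsets G p" for S
    using that x unfolding invariant_inverse_closed_subsets_def by blast
  then show ?thesis using x px inv_iff[OF _ x] inv_iff[OF _ px] by blast
qed

lemma square_eq_one_iff_inv_eq: "y \<in> carrier G \<Longrightarrow> y \<otimes> y = \<one> \<longleftrightarrow> inv y = y"
  by (metis inv_equality r_inv)

lemma card_four_if_moved_non_involution:
  assumes p: "p \<in> hom G G" "inj_on p (carrier G)" and x: "x \<in> carrier G"
    and moved: "x \<in> moved_set G p" and nsq: "x \<otimes> x \<noteq> \<one>"
  shows "card {x, inv x, p x, inv (p x)} = 4"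
proof -
  have px: "p x \<in> carrier G" using hom_in_carrier[OF p(1) x] .
  have "p x \<otimes> p x = p (x \<otimes> x)" using hom_mult[OF p(1) x x] by simp
  also have "\<dots> \<noteq> p \<one>" using nsq inj_on_eq_iff[OF p(2)] x by simp
  finally have "p x \<otimes> p x \<noteq> \<one>" using endo_one[OF p(1)] by simp
  then have xi: "inv x \<noteq> x" and pxi: "inv (p x) \<noteq> p x"
    using nsq square_eq_one_iff_inv_eq x px by auto
  have m: "p x \<noteq> x" "p x \<noteq> inv x" using moved unfolding moved_set_def by auto
  have ipx: "inv (p x) \<noteq> x"
  proof
    assume "inv (p x) = x"
    then have "inv (inv (p x)) = inv x" by simp
    then show False using m px by simp
  qed
  have ipi: "inv (p x) \<noteq> inv x"
  proof
    assume "inv (p x) = inv x"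
    then have "inv (inv (p x)) = inv (inv x)" by simp
    then show False using m px x by simp
  qed
  show ?thesis
    using not_sym[OF xi] not_sym[OF m(1)] not_sym[OF ipx] not_sym[OF m(2)] not_sym[OF ipi]
      not_sym[OF pxi] by simp
qed

lemma card_class_elements_ge:
  assumes p: "p \<in> hom G G" "inj_on p (carrier G)" and x: "x \<in> carrier G"
  shows "(if x \<otimes> x = \<one> then 1 else 2) * (if x \<in> moved_set G p then 2 else 1)
         \<le> card {x, inv x, p x, inv (p x)}"
proof -
  have fin: "finite {x, inv x, p x, inv (p x)}" by simp
  consider "x \<notin> moved_set G p" "x \<otimes> x = \<one>" | "x \<notin> moved_set G p" "x \<otimes> x \<noteq> \<one>"
    | "x \<in> moved_set G p" "x \<otimes> x = \<one>" | "x \<in> moved_set G p" "x \<otimes> x \<noteq> \<one>"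
    by blast
  then show ?thesis
  proof cases
    case 1
    have "0 < card {x, inv x, p x, inv (p x)}" using fin by (simp add: card_gt_0_iff)
    then show ?thesis using 1 by simp
  next
    case 2
    then have "inv x \<noteq> x" using square_eq_one_iff_inv_eq[OF x] by simp
    then have "card {x, inv x} = 2" by simp
    moreover have "card {x, inv x} \<le> card {x, inv x, p x, inv (p x)}" using fin by (rule card_mono) auto
    ultimately show ?thesis using 2 by simp
  next
    case 3
    then have "p x \<noteq> x" unfolding moved_set_def by simp
    then have "card {x, p x} = 2" by simp
    moreover have "card {x, p x} \<le> card {x, inv x, p x, inv (p x)}" using fin by (rule card_mono) auto
    ultimately show ?thesis using 3 by simp
  next
    case 4
    then have "card {x, inv x, p x, inv (p x)} = 4"
      using card_four_if_moved_non_involution[OF p x] by blast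
    then show ?thesis using 4 by simp
  qed
qed

lemma card_invariant_inverse_closed_subsets_le:
  assumes fin: "finite (carrier G)" and p: "p \<in> hom G G" "inj_on p (carrier G)"
  shows "real (card (invariant_inverse_closed_subsets G p))
         \<le> 2 powr (c_num G - real (card (moved_set G p)) / 4)"
proof -
  define cls where "cls x = {y\<in>carrier G. \<forall>S\<in>invariant_inverse_closed_subsets G p. x \<in> S \<longleftrightarrow> y \<in> S}" for x
  have "1 / real (card (cls x))
        \<le> (if x \<otimes> x = \<one> then 1 else 1/2) - (if x \<in> moved_set G p then 1/4 else 0)"
    if x: "x \<in> carrier G" for x
  proof -
    have "{x, inv x, p x, inv (p x)} \<subseteq> cls x"
      unfolding cls_def by (rule class_contains_inv_and_image[OF p(1) x])
    then have "card {x, inv x, p x, inv (p x)} \<le> card (cls x)"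
      by (rule card_mono[rotated]) (use fin in \<open>simp add: cls_def\<close>)
    then have "real ((if x \<otimes> x = \<one> then 1 else 2) * (if x \<in> moved_set G p then 2 else 1)) \<le> real (card (cls x))"
      using card_class_elements_ge[OF p x] by linarith
    then show ?thesis
      by (cases "x \<otimes> x = \<one>"; cases "x \<in> moved_set G p") (auto simp: divide_simps)
  qed
  then have "(\<Sum>x\<in>carrier G. 1 / real (card (cls x)))
        \<le> (\<Sum>x\<in>carrier G. (if x \<otimes> x = \<one> then 1 else 1/2) - (if x \<in> moved_set G p then 1/4 else 0))"
    by (rule sum_mono)
  also have "\<dots> = c_num G - real (card (moved_set G p)) / 4"
  proof -
    have "(\<Sum>x\<in>carrier G. if x \<otimes> x = \<one> then 1 else 1/2 :: real)
          = (\<Sum>x\<in>carrier G. 1/2 + (if x \<otimes> x = \<one> then 1/2 else 0))"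
      by (rule sum.cong) auto
    also have "\<dots> = c_num G"
      unfolding c_num_def invol_set_def using sum.inter_filter[OF fin, of "\<lambda>_. 1/2::real"]
      by (simp add: sum.distrib)
    finally show ?thesis
      using sum.inter_filter[OF fin, of "\<lambda>_. 1/4::real" "\<lambda>x. x \<in> moved_set G p"]
      by (simp add: sum_subtractf moved_set_def)
  qed
  finally have sum_le: "(\<Sum>x\<in>carrier G. 1 / real (card (cls x))) \<le> c_num G - real (card (moved_set G p)) / 4" .
  have "real (card (invariant_inverse_closed_subsets G p)) \<le> 2 powr (\<Sum>x\<in>carrier G. 1 / real (card (cls x)))"
    unfolding cls_def
    by (rule card_family_le_powr_sum[OF fin]) (simp add: invariant_inverse_closed_subsets_def)
  also have "\<dots> \<le> 2 powr (c_num G - real (card (moved_set G p)) / 4)" using sum_le by simp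
  finally show ?thesis .
qed

lemma card_invariant_inverse_closed_subsets_le_if_not_excluded:
  assumes fin: "finite (carrier G)" and p: "p \<in> hom G G" "inj_on p (carrier G)"
    and nontriv: "\<exists>x\<in>carrier G. p x \<noteq> x"
    and excl: "\<not> abelian_exp_gt2 G" "\<not> gen_dicyclic G"
  shows "real (card (invariant_inverse_closed_subsets G p))
         \<le> 2 powr (c_num G - real (card (carrier G)) / 96)"
proof -
  interpret finite_group_endo G p by unfold_locales (use p(1) fin in auto)
  have "card (carrier G) \<le> 16 * card (moved_set G p)"
    using abelian_or_dicyclic_if_few_moved[OF nontriv] excl by linarith
  then have "c_num G - real (card (moved_set G p)) / 4 \<le> c_num G - real (card (carrier G)) / 96"
    by linarith
  then show ?thesis
    using card_invariant_inverse_closed_subsets_le[OF fin p] by (simp add: order_trans)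
qed

end

section \<open>Counting endomorphisms\<close>

context group
begin

lemma exists_short_generating_list:
  assumes fin: "finite (carrier G)"
  shows "\<exists>gs. set gs \<subseteq> carrier G \<and> 2 ^ length gs \<le> card (carrier G) \<and> generate G (set gs) = carrier G"
proof -
  have "\<exists>hs. set hs \<subseteq> carrier G \<and> 2 ^ length hs \<le> card (carrier G) \<and> generate G (set hs) = carrier G"
    if "set gs \<subseteq> carrier G" "2 ^ length gs \<le> card (generate G (set gs))" for gs
    using that
  proof (induction "card (carrier G) - card (generate G (set gs))" arbitrary: gs rule: less_induct)
    case less
    show ?case
    proof (cases "generate G (set gs) = carrier G")
      case True
      then show ?thesis using less.prems by auto
    next
      case False
      then obtain g where g: "g \<in> carrier G" "g \<notin> generate G (set gs)"
        using generate_incl[OF less.prems(1)] by blast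
      have gs': "set (g # gs) \<subseteq> carrier G" using g less.prems(1) by simp
      have fin': "finite (generate G (set (g # gs)))"
        using finite_subset[OF generate_incl[OF gs'] fin] .
      have "generate G (set gs) \<subset> generate G (set (g # gs))"
        using g mono_generate[of "set gs" "set (g # gs)"] generate.incl[of g "set (g # gs)"] by auto
      then have "2 * card (generate G (set gs)) \<le> card (generate G (set (g # gs)))"
        and "card (generate G (set gs)) < card (generate G (set (g # gs)))"
        using double_card_le_if_proper_subgroup[OF generate_is_subgroup[OF less.prems(1)]
            generate_is_subgroup[OF gs'] _ fin'] psubset_card_mono[OF fin'] by auto
      moreover have "card (generate G (set (g # gs))) \<le> card (carrier G)"
        using card_mono[OF fin generate_incl[OF gs']] .
      ultimately have "card (carrier G) - card (generate G (set (g # gs)))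
                         < card (carrier G) - card (generate G (set gs))"
        and "2 ^ length (g # gs) \<le> card (generate G (set (g # gs)))"
        using less.prems(2) by auto
      then show ?thesis using less.hyps gs' by blast
    qed
  qed
  from this[of "[]"] show ?thesis using generate_empty by auto
qed

lemma finite_endomorphisms:
  assumes "finite (carrier G)"
  shows "finite (hom G G \<inter> extensional (carrier G))"
proof (rule finite_subset)
  show "hom G G \<inter> extensional (carrier G) \<subseteq> carrier G \<rightarrow>\<^sub>E carrier G"
    by (auto simp: hom_def PiE_def)
  show "finite (carrier G \<rightarrow>\<^sub>E carrier G)" using assms by (intro finite_PiE) auto
qed

text \<open>An endomorphism is determined by its values on a generating list.\<close>
lemma card_endomorphisms_le_power:
  assumes fin: "finite (carrier G)"
  obtains k where "2 ^ k \<le> card (carrier G)"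
    and "card (hom G G \<inter> extensional (carrier G)) \<le> card (carrier G) ^ k"
proof -
  obtain gs where gs: "set gs \<subseteq> carrier G" "2 ^ length gs \<le> card (carrier G)"
    "generate G (set gs) = carrier G"
    using exists_short_generating_list[OF fin] by blast
  have "inj_on (\<lambda>p. map p gs) (hom G G \<inter> extensional (carrier G))"
  proof (rule inj_onI)
    fix p q assume p: "p \<in> hom G G \<inter> extensional (carrier G)"
      and q: "q \<in> hom G G \<inter> extensional (carrier G)" and e: "map p gs = map q gs"
    have "set gs \<subseteq> {x\<in>carrier G. p x = q x}" using gs(1) e by (auto simp: map_eq_conv)
    moreover have "subgroup {x\<in>carrier G. p x = q x} G" using subgroup_equalizer p q by blast
    ultimately have "generate G (set gs) \<subseteq> {x\<in>carrier G. p x = q x}" by (rule generate_subgroup_incl)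
    then show "p = q" using p q gs(3) by (auto intro: extensionalityI)
  qed
  moreover have "(\<lambda>p. map p gs) ` (hom G G \<inter> extensional (carrier G))
                 \<subseteq> {xs. set xs \<subseteq> carrier G \<and> length xs = length gs}"
  proof (rule image_subsetI)
    fix p assume p: "p \<in> hom G G \<inter> extensional (carrier G)"
    have "p x \<in> carrier G" if "x \<in> set gs" for x using hom_in_carrier[of p G G x] p gs(1) that by blast
    then show "map p gs \<in> {xs. set xs \<subseteq> carrier G \<and> length xs = length gs}" by auto
  qed
  ultimately have "card (hom G G \<inter> extensional (carrier G))
                   \<le> card {xs. set xs \<subseteq> carrier G \<and> length xs = length gs}"
    by (rule card_inj_on_le) (rule finite_lists_length_eq[OF fin])
  then show ?thesis using that gs(2) card_lists_length_eq[OF fin] by simp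
qed

end

lemma power_le_powr_log_squared:
  assumes "2 ^ k \<le> n"
  shows "real n ^ k \<le> 2 powr (log 2 (real n))\<^sup>2"
proof -
  have "Suc 0 \<le> 2 ^ k" by simp
  then have n: "real n > 0" using assms by linarith
  have "2 powr real k = real (2 ^ k)" by (simp add: powr_realpow)
  also have "\<dots> \<le> real n" using assms by (rule of_nat_mono)
  finally have "real k \<le> log 2 (real n)" using le_log_iff[of 2 "real n" "real k"] n by simp
  then have "log 2 (real n) * real k \<le> (log 2 (real n))\<^sup>2"
    using n mult_left_mono[of "real k" "log 2 (real n)"] by (simp add: power2_eq_square)
  moreover have "real n ^ k = 2 powr (log 2 (real n) * real k)"
  proof -
    have "real n ^ k = (2 powr log 2 (real n)) ^ k" using n by simp
    also have "\<dots> = 2 powr (log 2 (real n) * real k)" by (simp add: powr_realpow[symmetric] powr_powr)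
    finally show ?thesis .
  qed
  ultimately show ?thesis by simp
qed

lemma (in group) card_endomorphisms_le_powr:
  assumes "finite (carrier G)"
  shows "real (card (hom G G \<inter> extensional (carrier G))) \<le> 2 powr (log 2 (real (card (carrier G))))\<^sup>2"
proof -
  obtain k where "2 ^ k \<le> card (carrier G)"
    and k: "card (hom G G \<inter> extensional (carrier G)) \<le> card (carrier G) ^ k"
    using card_endomorphisms_le_power[OF assms] .
  then have "real (card (hom G G \<inter> extensional (carrier G))) \<le> real (card (carrier G)) ^ k"
    by (metis of_nat_le_iff of_nat_power)
  also have "\<dots> \<le> 2 powr (log 2 (real (card (carrier G))))\<^sup>2"
    by (rule power_le_powr_log_squared) fact
  finally show ?thesis .
qed

section \<open>Normalisers of regular representations\<close>

lemma cay_aut_inj: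
  assumes "f \<in> cay_aut G S"
  shows "inj f"
proof (rule injI)
  fix x y assume fxy: "f x = f y"
  have inj: "inj_on f (carrier G)" and into: "\<And>z. z \<in> carrier G \<Longrightarrow> f z \<in> carrier G"
    and off: "\<And>z. z \<notin> carrier G \<Longrightarrow> f z = z"
    using assms unfolding cay_aut_def bij_betw_def by auto
  show "x = y"
  proof (cases "x \<in> carrier G"; cases "y \<in> carrier G")
    assume "x \<in> carrier G" "y \<in> carrier G"
    then show ?thesis using inj fxy by (simp add: inj_on_eq_iff)
  next
    assume "x \<in> carrier G" "y \<notin> carrier G"
    then show ?thesis using fxy into off by metis
  next
    assume "x \<notin> carrier G" "y \<in> carrier G"
    then show ?thesis using fxy into off by metis
  next
    assume "x \<notin> carrier G" "y \<notin> carrier G"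
    then show ?thesis using fxy off by simp
  qed
qed

context group
begin

lemma cay_aut_closed: "f \<in> cay_aut G S \<Longrightarrow> x \<in> carrier G \<Longrightarrow> f x \<in> carrier G"
  unfolding cay_aut_def by (auto dest: bij_betwE)

text \<open>
  Normalising means f \<circ> \<rho>_r \<circ> f^-1 = \<rho>_s for some s; evaluating at f 1 gives s = (f 1)^-1 (f r).
\<close>
lemma cay_normalizer_mult:
  assumes f: "f \<in> cay_normalizer G S" and x: "x \<in> carrier G" and r: "r \<in> carrier G"
  shows "f (x \<otimes> r) = f x \<otimes> inv (f \<one>) \<otimes> f r"
proof -
  have fA: "f \<in> cay_aut G S" using f unfolding cay_normalizer_def by blast
  have "f \<circ> rreg G r \<circ> inv_into UNIV f \<in> reg_rep G"
    using f r unfolding cay_normalizer_def reg_rep_def by blast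
  then obtain s where s: "s \<in> carrier G" and fs: "f \<circ> rreg G r \<circ> inv_into UNIV f = rreg G s"
    unfolding reg_rep_def by blast
  have ev: "f (y \<otimes> r) = f y \<otimes> s" if y: "y \<in> carrier G" for y
    using fun_cong[OF fs, of "f y"] y r cay_aut_closed[OF fA y] inv_into_f_f[OF cay_aut_inj[OF fA]]
    unfolding rreg_def by simp
  have "f r = f \<one> \<otimes> s" using ev[of \<one>] r by simp
  then have "s = inv (f \<one>) \<otimes> f r"
    using s r cay_aut_closed[OF fA] by (simp add: inv_solve_left)
  then show ?thesis using ev[OF x] x r s cay_aut_closed[OF fA] by (simp add: m_assoc)
qed

lemma cay_normalizer_nonregular_automorphism:
  assumes f: "f \<in> cay_normalizer G S" and nreg: "f \<notin> reg_rep G"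
  defines "p \<equiv> \<lambda>x\<in>carrier G. f x \<otimes> inv (f \<one>)"
  shows "p \<in> mon G G" and "\<exists>x\<in>carrier G. p x \<noteq> x" and "\<forall>x\<in>carrier G. x \<in> S \<longleftrightarrow> p x \<in> S"
proof -
  have fA: "f \<in> cay_aut G S" using f unfolding cay_normalizer_def by blast
  note fG = cay_aut_closed[OF fA]
  have f1G: "f \<one> \<in> carrier G" using fG by simp
  have "p \<in> hom G G"
  proof (rule homI)
    fix x y assume "x \<in> carrier G" "y \<in> carrier G"
    then show "p (x \<otimes> y) = p x \<otimes> p y"
      using fG f1G cay_normalizer_mult[OF f] by (simp add: p_def m_assoc)
  qed (use fG f1G in \<open>simp add: p_def\<close>)
  moreover have "inj_on p (carrier G)"
  proof (rule inj_onI)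
    fix x y assume x: "x \<in> carrier G" and y: "y \<in> carrier G" and "p x = p y"
    then have "f x = f y" using fG f1G by (simp add: p_def)
    then show "x = y" using injD[OF cay_aut_inj[OF fA]] by blast
  qed
  ultimately show "p \<in> mon G G" unfolding mon_def by blast
  show "\<forall>x\<in>carrier G. x \<in> S \<longleftrightarrow> p x \<in> S"
  proof
    fix x assume x: "x \<in> carrier G"
    have "x \<otimes> inv \<one> \<in> S \<longleftrightarrow> f x \<otimes> inv (f \<one>) \<in> S"
      using fA x unfolding cay_aut_def by blast
    then show "x \<in> S \<longleftrightarrow> p x \<in> S" using x by (simp add: p_def)
  qed
  show "\<exists>x\<in>carrier G. p x \<noteq> x"
  proof (rule ccontr)
    assume fixes_all: "\<not> (\<exists>x\<in>carrier G. p x \<noteq> x)"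
    have "f x = rreg G (f \<one>) x" for x
    proof (cases "x \<in> carrier G")
      case True
      then have "f x \<otimes> inv (f \<one>) = x" using fixes_all by (simp add: p_def)
      then show ?thesis using True fG f1G by (simp add: rreg_def inv_solve_right')
    next
      case False
      then show ?thesis using fA unfolding rreg_def cay_aut_def by simp
    qed
    then have "f \<in> reg_rep G" using f1G unfolding reg_rep_def by blast
    then show False using nreg by blast
  qed
qed

lemma nonregular_normalizer_sets_subset:
  "{S. S \<subseteq> carrier G \<and> S = subset_inv G S \<and> reg_rep G \<subset> cay_normalizer G S}
   \<subseteq> (\<Union>p\<in>{p\<in>mon G G \<inter> extensional (carrier G). \<exists>x\<in>carrier G. p x \<noteq> x}.
        invariant_inverse_closed_subsets G p)"
proof
  fix S assume "S \<in> {S. S \<subseteq> carrier G \<and> S = subset_inv G S \<and> reg_rep G \<subset> cay_normalizer G S}"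
  then obtain f where S: "S \<subseteq> carrier G" "S = subset_inv G S"
    and f: "f \<in> cay_normalizer G S" "f \<notin> reg_rep G" by blast
  define p where "p = (\<lambda>x\<in>carrier G. f x \<otimes> inv (f \<one>))"
  have "p \<in> {p\<in>mon G G \<inter> extensional (carrier G). \<exists>x\<in>carrier G. p x \<noteq> x}"
    using cay_normalizer_nonregular_automorphism(1,2)[OF f] unfolding p_def by simp
  moreover have "S \<in> invariant_inverse_closed_subsets G p"
    using S cay_normalizer_nonregular_automorphism(3)[OF f]
    unfolding invariant_inverse_closed_subsets_def p_def by simp
  ultimately show "S \<in> (\<Union>p\<in>{p\<in>mon G G \<inter> extensional (carrier G). \<exists>x\<in>carrier G. p x \<noteq> x}.
        invariant_inverse_closed_subsets G p)" by blast
qed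

end

lemma real_card_UN_le:
  assumes "finite I" and "\<forall>i\<in>I. real (card (A i)) \<le> B"
  shows "real (card (\<Union>i\<in>I. A i)) \<le> real (card I) * B"
proof -
  have "real (card (\<Union>i\<in>I. A i)) \<le> (\<Sum>i\<in>I. real (card (A i)))"
    using card_UN_le[OF assms(1), of A] by (metis of_nat_le_iff of_nat_sum)
  also have "\<dots> \<le> real (card I) * B" using sum_mono[of I _ "\<lambda>_. B"] assms(2) by simp
  finally show ?thesis .
qed

theorem proposition2p5:
  fixes R :: "('a, 'b) monoid_scheme"
  assumes "group R" and "finite (carrier R)"
    and "\<not> abelian_exp_gt2 R" and "\<not> gen_dicyclic R"
  shows "real (card {S. S \<subseteq> carrier R \<and> S = subset_inv R S
                    \<and> reg_rep R \<subset> cay_normalizer R S})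
         \<le> 2 powr (c_num R - real (card (carrier R)) / 96
                    + (log 2 (real (card (carrier R))))\<^sup>2)"
proof -
  interpret group R by fact
  define P where "P = {p\<in>mon R R \<inter> extensional (carrier R). \<exists>x\<in>carrier R. p x \<noteq> x}"
  define B where "B = 2 powr (c_num R - real (card (carrier R)) / 96)"
  have PE: "P \<subseteq> hom R R \<inter> extensional (carrier R)" unfolding P_def mon_def by blast
  have "finite (\<Union>p\<in>P. invariant_inverse_closed_subsets R p)"
    by (rule finite_subset[of _ "Pow (carrier R)"]) (use assms(2) in \<open>auto simp: invariant_inverse_closed_subsets_def\<close>)
  then have "real (card {S. S \<subseteq> carrier R \<and> S = subset_inv R S \<and> reg_rep R \<subset> cay_normalizer R S})
        \<le> real (card (\<Union>p\<in>P. invariant_inverse_closed_subsets R p))"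
    using nonregular_normalizer_sets_subset unfolding P_def by (intro of_nat_mono card_mono)
  also have "\<dots> \<le> real (card P) * B"
  proof (rule real_card_UN_le)
    show "finite P" using finite_subset[OF PE finite_endomorphisms[OF assms(2)]] .
    show "\<forall>p\<in>P. real (card (invariant_inverse_closed_subsets R p)) \<le> B"
      using card_invariant_inverse_closed_subsets_le_if_not_excluded[OF assms(2) _ _ _ assms(3,4)]
      unfolding P_def B_def mon_def by blast
  qed
  also have "\<dots> \<le> 2 powr (log 2 (real (card (carrier R))))\<^sup>2 * B"
  proof (rule mult_right_mono)
    have "real (card P) \<le> real (card (hom R R \<inter> extensional (carrier R)))"
      using card_mono[OF finite_endomorphisms[OF assms(2)] PE] by simp
    then show "real (card P) \<le> 2 powr (log 2 (real (card (carrier R))))\<^sup>2"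
      using card_endomorphisms_le_powr[OF assms(2)] by linarith
  qed (simp add: B_def)
  also have "\<dots> = 2 powr (c_num R - real (card (carrier R)) / 96 + (log 2 (real (card (carrier R))))\<^sup>2)"
    unfolding B_def by (simp add: powr_add)
  finally show ?thesis .
qed

end
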